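(* Let $N$ be an $n$-dimensional hypersurface isometrically immersed in Euclidean space $\mathbb R^{n+1}$. Then $N$ is $\Phi$-SSU with respect to this immersion if and only if at every point, for a suitable choice of unit normal, its principal curvatures satisfy $0<\lambda_1\le\lambda_2\le\cdots\le\lambda_n<\frac13(\lambda_1+\cdots+\lambda_{n-1})$.
   Context: For an isometric immersion of a Riemannian $n$-manifold $N$ into $\mathbb R^q$ with second fundamental form $\mathsf B$, $N$ is $\Phi$-SSU with respect to this immersion if for every $y\in N$ and every unit tangent vector $\mathsf x\in T_yN$, $\sum_{\beta=1}^n\big(4|\mathsf B(\mathsf x,\mathsf e_\beta)|^2-\langle \mathsf B(\mathsf x,\mathsf x),\mathsf B(\mathsf e_\beta,\mathsf e_\beta)\rangle\big)<0$, where $\{\mathsf e_\beta\}$ is an orthonormal basis of $T_yN$. *)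

theory Defs
  imports "HOL-Analysis.Analysis"
begin

text \<open>Pointwise model of an isometric immersion: N is a set of points; at each point y
the tangent space T_yN is identified isometrically with real^'n (so the standard basis
axis b 1 is an orthonormal basis of T_yN), and B y is the second fundamental form at y,
with values in the ambient Euclidean space.\<close>

definition phi_SSU :: "'y set \<Rightarrow> ('y \<Rightarrow> real^'n \<Rightarrow> real^'n \<Rightarrow> 'v::real_inner) \<Rightarrow> bool" where
  "phi_SSU N B \<longleftrightarrow>
     (\<forall>y\<in>N. \<forall>x::real^'n. norm x = 1 \<longrightarrow>
        (\<Sum>b\<in>(UNIV::'n set). 4 * (norm (B y x (axis b 1)))^2
             - inner (B y x x) (B y (axis b 1) (axis b 1))) < 0)"

text \<open>lam 0 \<le> ... \<le> lam (n-1) (n = CARD('n)) are the principal curvatures of the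
self-adjoint shape operator S, i.e. its eigenvalues counted with multiplicity, realised
by an orthonormal frame of principal directions u 0, ..., u (n-1).\<close>

definition principal_curvatures :: "real^'n^'n \<Rightarrow> (nat \<Rightarrow> real) \<Rightarrow> bool" where
  "principal_curvatures S lam \<longleftrightarrow>
     (\<forall>i j. i \<le> j \<and> j < CARD('n) \<longrightarrow> lam i \<le> lam j) \<and>
     (\<exists>u :: nat \<Rightarrow> real^'n.
        (\<forall>i<CARD('n). S *v u i = lam i *\<^sub>R u i) \<and>
        (\<forall>i<CARD('n). \<forall>j<CARD('n). inner (u i) (u j) = (if i = j then 1 else 0)))"

end

theory Submission
  imports Defs
begin

(* With B(x, z) = <x, A z> nu and |nu| = 1, the Phi-SSU sum at a unit tangent vector x equals
   Q(x) = 4 |A x|^2 - <x, A x> tr A.  In an orthonormal frame u_i of principal directions, with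
   principal curvatures lam_i and T = lam_1 + ... + lam_n, this reads
   Q(x) = sum_i <x, u_i>^2 lam_i (4 lam_i - T), so Q < 0 on the unit sphere iff
   lam_i (4 lam_i - T) < 0 for every i.  Orienting the normal so that T >= 0, this says
   0 < lam_i < T / 4 for all i, which for nondecreasing lam_i is exactly
   0 < lam_1 and 3 lam_n < lam_1 + ... + lam_(n-1).
   The frame of principal directions comes from the spectral theorem, proved by repeatedly
   minimising <x, A x> over unit vectors orthogonal to the eigenvectors already found. *)

definition orthonormal_seq :: "nat \<Rightarrow> (nat \<Rightarrow> 'a::real_inner) \<Rightarrow> bool" where
  "orthonormal_seq k u \<longleftrightarrow> (\<forall>i<k. \<forall>j<k. u i \<bullet> u j = (if i = j then 1 else 0))"

lemma orthonormal_seq_Suc: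
  assumes "orthonormal_seq k u" "norm v = 1" "\<And>j. j < k \<Longrightarrow> u j \<bullet> v = 0"
  shows "orthonormal_seq (Suc k) (u(k := v))"
  using assms by (auto simp: orthonormal_seq_def less_Suc_eq norm_eq_1 inner_commute)

lemma orthonormal_seq_expansion:
  fixes u :: "nat \<Rightarrow> 'a::euclidean_space"
  assumes u: "orthonormal_seq DIM('a) u"
  shows "(\<Sum>i<DIM('a). (x \<bullet> u i) *\<^sub>R u i) = x"
proof -
  let ?B = "u ` {..<DIM('a)}"
  have inj: "inj_on u {..<DIM('a)}"
    using u by (auto intro!: inj_onI simp: orthonormal_seq_def) (metis zero_neq_one)
  have orth: "pairwise orthogonal ?B" and unit: "\<And>b. b \<in> ?B \<Longrightarrow> norm b = 1"
    using u by (auto simp: orthonormal_seq_def pairwise_def orthogonal_def norm_eq_1)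
  then have "independent ?B" by (intro pairwise_orthogonal_independent) force+
  then have "UNIV \<subseteq> span ?B"
    by (rule card_ge_dim_independent[rotated]) (use card_image[OF inj] in auto)
  then show ?thesis
    using orthonormal_basis_expand[OF orth unit, of x] by (auto simp: sum.reindex[OF inj])
qed

lemma orthonormal_seq_parseval:
  fixes u :: "nat \<Rightarrow> 'a::euclidean_space"
  assumes "orthonormal_seq DIM('a) u"
  shows "x \<bullet> y = (\<Sum>i<DIM('a). (x \<bullet> u i) * (y \<bullet> u i))"
proof -
  have "x \<bullet> y = (\<Sum>i<DIM('a). (x \<bullet> u i) *\<^sub>R u i) \<bullet> y"
    using orthonormal_seq_expansion[OF assms] by simp
  also have "\<dots> = (\<Sum>i<DIM('a). (x \<bullet> u i) * (u i \<bullet> y))"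
    by (simp add: inner_sum_left)
  finally show ?thesis by (simp add: inner_commute)
qed

lemma orthonormal_seq_parseval_cart:
  fixes u :: "nat \<Rightarrow> real^'n"
  assumes "orthonormal_seq CARD('n) u"
  shows "x \<bullet> y = (\<Sum>i<CARD('n). (x \<bullet> u i) * (y \<bullet> u i))"
  using orthonormal_seq_parseval[of u x y] assms by (simp only: DIM_cart DIM_real mult_1_right)

lemma linear_coeff_zero_if_quadratic_nonneg:
  fixes a c :: real
  assumes "\<And>t. 0 \<le> 2 * t * a + t\<^sup>2 * c"
  shows "a = 0"
proof (rule ccontr)
  assume "a \<noteq> 0"
  define d where "d = \<bar>c\<bar> + 1"
  have "d > 0" "c / d - 2 < 0" unfolding d_def by (auto simp: field_simps)
  have "2 * (- a / d) * a + (- a / d)\<^sup>2 * c = a\<^sup>2 / d * (c / d - 2)"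
    using \<open>d > 0\<close> by (simp add: field_simps power2_eq_square)
  also have "\<dots> < 0"
    using \<open>a \<noteq> 0\<close> \<open>d > 0\<close> \<open>c / d - 2 < 0\<close> by (intro mult_pos_neg) auto
  finally show False using assms[of "- a / d"] by simp
qed

lemma symmetric_matrix_inner:
  fixes A :: "real^'n^'n"
  assumes "transpose A = A"
  shows "x \<bullet> (A *v y) = (A *v x) \<bullet> y"
  by (metis assms dot_lmul_matrix vector_transpose_matrix)

lemma rayleigh_minimizer_is_eigenvector:
  fixes A :: "real^'n^'n"
  assumes sym: "transpose A = A"
    and S: "subspace S" and invariant: "\<And>x. x \<in> S \<Longrightarrow> A *v x \<in> S"
    and v: "v \<in> S" "norm v = 1"
    and min: "\<And>x. x \<in> S \<Longrightarrow> (v \<bullet> (A *v v)) * (x \<bullet> x) \<le> x \<bullet> (A *v x)"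
  shows "A *v v = (v \<bullet> (A *v v)) *\<^sub>R v"
proof -
  define \<mu> where "\<mu> = v \<bullet> (A *v v)"
  (* The residual w is orthogonal to v; minimality along the line v + t w forces it to vanish. *)
  define w where "w = A *v v - \<mu> *\<^sub>R v"
  have vv: "v \<bullet> v = 1" using v(2) by (simp add: norm_eq_1)
  have "w \<in> S" unfolding w_def using S v invariant by (simp add: subspace_diff subspace_scale)
  have wv: "v \<bullet> w = 0" unfolding w_def \<mu>_def using vv
    by (simp add: inner_diff_right)
  have Av: "A *v v = w + \<mu> *\<^sub>R v" by (simp add: w_def)
  have vAw: "v \<bullet> (A *v w) = w \<bullet> w" and wAv: "w \<bullet> (A *v v) = w \<bullet> w"
  proof -
    show "w \<bullet> (A *v v) = w \<bullet> w" unfolding Av using wv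
      by (simp add: inner_add_right inner_commute[of w v])
    then show "v \<bullet> (A *v w) = w \<bullet> w"
      by (metis symmetric_matrix_inner[OF sym] inner_commute)
  qed
  have "0 \<le> 2 * t * (w \<bullet> w) + t\<^sup>2 * (w \<bullet> (A *v w) - \<mu> * (w \<bullet> w))" for t
  proof -
    let ?x = "v + t *\<^sub>R w"
    have "?x \<in> S" using S \<open>w \<in> S\<close> v by (simp add: subspace_add subspace_scale)
    have "?x \<bullet> ?x = 1 + t\<^sup>2 * (w \<bullet> w)"
      using vv wv by (simp add: inner_add_left inner_add_right inner_commute power2_eq_square)
    moreover have "?x \<bullet> (A *v ?x) = \<mu> + 2 * t * (w \<bullet> w) + t\<^sup>2 * (w \<bullet> (A *v w))"
      using vAw wAv unfolding \<mu>_def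
      by (simp add: matrix_vector_right_distrib matrix_vector_mult_scaleR inner_add_left
          inner_add_right power2_eq_square distrib_left)
    ultimately show ?thesis using min[OF \<open>?x \<in> S\<close>] unfolding \<mu>_def by (simp add: algebra_simps)
  qed
  then have "w \<bullet> w = 0" by (rule linear_coeff_zero_if_quadratic_nonneg)
  then show ?thesis unfolding w_def \<mu>_def by simp
qed

lemma symmetric_matrix_min_eigenvector:
  fixes A :: "real^'n^'n"
  assumes sym: "transpose A = A"
    and S: "subspace S" and invariant: "\<And>x. x \<in> S \<Longrightarrow> A *v x \<in> S" and "S \<noteq> {0}"
  obtains v where "v \<in> S" "norm v = 1" "A *v v = (v \<bullet> (A *v v)) *\<^sub>R v"
    "\<And>x. x \<in> S \<Longrightarrow> norm x = 1 \<Longrightarrow> v \<bullet> (A *v v) \<le> x \<bullet> (A *v x)"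
proof -
  let ?K = "S \<inter> sphere 0 1"
  have "compact ?K" using S by (intro closed_Int_compact closed_subspace compact_sphere)
  moreover obtain x where "x \<in> S" "x \<noteq> 0" using \<open>S \<noteq> {0}\<close> S subspace_0 by auto
  then have "x /\<^sub>R norm x \<in> ?K" using S by (simp add: subspace_scale)
  then have "?K \<noteq> {}" by blast
  moreover have "continuous_on ?K (\<lambda>x. x \<bullet> (A *v x))"
    by (intro continuous_intros linear_continuous_on matrix_vector_mul_linear
        linear_conv_bounded_linear[THEN iffD1])
  ultimately have "\<exists>v\<in>?K. \<forall>x\<in>?K. v \<bullet> (A *v v) \<le> x \<bullet> (A *v x)"
    by (rule continuous_attains_inf)
  then obtain v where v: "v \<in> ?K" and min: "\<And>x. x \<in> ?K \<Longrightarrow> v \<bullet> (A *v v) \<le> x \<bullet> (A *v x)"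
    by blast
  have "(v \<bullet> (A *v v)) * (x \<bullet> x) \<le> x \<bullet> (A *v x)" if "x \<in> S" for x
  proof (cases "x = 0")
    case False
    then have "x /\<^sub>R norm x \<in> ?K" using S \<open>x \<in> S\<close> by (simp add: subspace_scale)
    moreover have "(x /\<^sub>R norm x) \<bullet> (A *v (x /\<^sub>R norm x)) = (x \<bullet> (A *v x)) / (x \<bullet> x)"
      by (simp add: matrix_vector_mult_scaleR dot_square_norm power2_eq_square field_simps)
    ultimately have "v \<bullet> (A *v v) \<le> (x \<bullet> (A *v x)) / (x \<bullet> x)"
      using min by metis
    then show ?thesis using False by (simp add: pos_le_divide_eq)
  qed simp
  then have "A *v v = (v \<bullet> (A *v v)) *\<^sub>R v"
    using rayleigh_minimizer_is_eigenvector[OF sym S invariant] v by auto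
  then show thesis using that v min by auto
qed

lemma orthogonal_comp_eigenvectors_invariant:
  fixes A :: "real^'n^'n"
  assumes sym: "transpose A = A" and eig: "\<And>w. w \<in> W \<Longrightarrow> \<exists>c. A *v w = c *\<^sub>R w"
    and x: "x \<in> orthogonal_comp W"
  shows "A *v x \<in> orthogonal_comp W"
proof -
  have "w \<bullet> (A *v x) = 0" if w: "w \<in> W" for w
  proof -
    obtain c where "A *v w = c *\<^sub>R w" using eig[OF w] by blast
    then show ?thesis
      using x w by (simp add: symmetric_matrix_inner[OF sym] orthogonal_comp_def orthogonal_def)
  qed
  then show ?thesis by (simp add: orthogonal_comp_def orthogonal_def)
qed

lemma orthogonal_comp_nontrivial:
  fixes u :: "nat \<Rightarrow> 'a::euclidean_space"
  assumes "k < DIM('a)"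
  shows "orthogonal_comp (u ` {..<k}) \<noteq> {0}"
proof -
  have "dim (u ` {..<k}) \<le> card (u ` {..<k})"
    by (rule dim_le_card) (auto intro: span_base)
  also have "\<dots> < DIM('a)" using card_image_le[of "{..<k}" u] assms by simp
  finally obtain x where "x \<noteq> 0" and x: "\<And>y. y \<in> span (u ` {..<k}) \<Longrightarrow> orthogonal x y"
    using orthogonal_to_subspace_exists by blast
  have "x \<in> orthogonal_comp (u ` {..<k})"
    unfolding orthogonal_comp_def using x by (auto intro: orthogonal_commute[THEN iffD1] span_base)
  with \<open>x \<noteq> 0\<close> show ?thesis by blast
qed

(* The minimality clause is what makes the eigenvalues of a complete frame nondecreasing. *)
definition rayleigh_frame :: "real^'n^'n \<Rightarrow> nat \<Rightarrow> (nat \<Rightarrow> real) \<Rightarrow> (nat \<Rightarrow> real^'n) \<Rightarrow> bool" where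
  "rayleigh_frame A k lam u \<longleftrightarrow> orthonormal_seq k u \<and> (\<forall>i<k. A *v u i = lam i *\<^sub>R u i) \<and>
     (\<forall>i<k. \<forall>x\<in>orthogonal_comp (u ` {..<i}). norm x = 1 \<longrightarrow> lam i \<le> x \<bullet> (A *v x))"

lemma rayleigh_frame_Suc:
  fixes A :: "real^'n^'n"
  assumes sym: "transpose A = A" and frame: "rayleigh_frame A k lam u" and k: "k < CARD('n)"
  shows "\<exists>lam' u'. rayleigh_frame A (Suc k) lam' u'"
proof -
  let ?W = "orthogonal_comp (u ` {..<k})"
  have "\<And>x. x \<in> ?W \<Longrightarrow> A *v x \<in> ?W"
    using frame by (intro orthogonal_comp_eigenvectors_invariant[OF sym])
        (auto simp: rayleigh_frame_def)
  moreover have "?W \<noteq> {0}" using orthogonal_comp_nontrivial[of k u] k by simp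
  ultimately obtain v where v: "v \<in> ?W" "norm v = 1" "A *v v = (v \<bullet> (A *v v)) *\<^sub>R v"
    and min: "\<And>x. x \<in> ?W \<Longrightarrow> norm x = 1 \<Longrightarrow> v \<bullet> (A *v v) \<le> x \<bullet> (A *v x)"
    using symmetric_matrix_min_eigenvector[OF sym subspace_orthogonal_comp] by metis
  have "orthonormal_seq (Suc k) (u(k := v))"
    using frame v by (intro orthonormal_seq_Suc)
        (auto simp: rayleigh_frame_def orthogonal_comp_def orthogonal_def)
  moreover have "(lam(k := v \<bullet> (A *v v))) i \<le> x \<bullet> (A *v x)"
    if i: "i < Suc k" and x: "x \<in> orthogonal_comp ((u(k := v)) ` {..<i})" "norm x = 1" for i x
  proof -
    have "(u(k := v)) ` {..<i} = u ` {..<i}" using i by auto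
    then show ?thesis using frame min i x by (cases "i = k") (auto simp: rayleigh_frame_def)
  qed
  ultimately have "rayleigh_frame A (Suc k) (lam(k := v \<bullet> (A *v v))) (u(k := v))"
    using frame v by (auto simp: rayleigh_frame_def less_Suc_eq)
  then show ?thesis by blast
qed

lemma rayleigh_frame_exists:
  fixes A :: "real^'n^'n"
  assumes "transpose A = A" and "k \<le> CARD('n)"
  shows "\<exists>lam u. rayleigh_frame A k lam u"
  using assms(2)
proof (induction k)
  case 0
  show ?case by (simp add: rayleigh_frame_def orthonormal_seq_def)
next
  case (Suc k)
  then show ?case using rayleigh_frame_Suc[OF assms(1)] by (meson Suc_leD Suc_le_lessD)
qed

theorem symmetric_matrix_principal_curvatures:
  fixes A :: "real^'n^'n"
  assumes "transpose A = A"
  shows "\<exists>lam. principal_curvatures A lam"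
proof -
  obtain lam u where frame: "rayleigh_frame A CARD('n) lam u"
    using rayleigh_frame_exists[OF assms] by blast
  then have on: "orthonormal_seq CARD('n) u" and eig: "\<forall>i<CARD('n). A *v u i = lam i *\<^sub>R u i"
    by (simp_all add: rayleigh_frame_def)
  have "lam i \<le> lam j" if "i \<le> j" "j < CARD('n)" for i j
  proof -
    have uj: "u j \<bullet> u j = 1" and "u j \<in> orthogonal_comp (u ` {..<i})"
      using on that by (auto simp: orthonormal_seq_def orthogonal_comp_def orthogonal_def)
    moreover have "\<forall>x\<in>orthogonal_comp (u ` {..<i}). norm x = 1 \<longrightarrow> lam i \<le> x \<bullet> (A *v x)"
      using frame that by (simp add: rayleigh_frame_def)
    ultimately have "lam i \<le> u j \<bullet> (A *v u j)" by (simp add: norm_eq_1)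
    also have "\<dots> = lam j" using eig uj that by simp
    finally show ?thesis .
  qed
  then show ?thesis using on eig unfolding principal_curvatures_def orthonormal_seq_def by blast
qed

lemma trace_eq_sum_orthonormal_seq:
  fixes A :: "real^'n^'n"
  assumes "orthonormal_seq CARD('n) u"
  shows "trace A = (\<Sum>i<CARD('n). u i \<bullet> (A *v u i))"
proof -
  note parseval = orthonormal_seq_parseval_cart[OF assms]
  have "u i \<bullet> (A *v u i) = (\<Sum>b\<in>UNIV. (axis b 1 \<bullet> u i) * (A $ b \<bullet> u i))" for i
    by (simp add: inner_vec_def[of "u i"] inner_axis' matrix_vector_mul_component)
  then have "(\<Sum>i<CARD('n). u i \<bullet> (A *v u i))
      = (\<Sum>i<CARD('n). \<Sum>b\<in>UNIV. (axis b 1 \<bullet> u i) * (A $ b \<bullet> u i))"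
    by simp
  also have "\<dots> = (\<Sum>b\<in>UNIV. axis b 1 \<bullet> A $ b)"
    by (subst sum.swap) (simp only: parseval[symmetric])
  also have "\<dots> = trace A" by (simp add: trace_def inner_axis')
  finally show ?thesis ..
qed

lemma trace_eq_sum_eigenvalues:
  fixes A :: "real^'n^'n"
  assumes "orthonormal_seq CARD('n) u" and "\<And>i. i < CARD('n) \<Longrightarrow> A *v u i = lam i *\<^sub>R u i"
  shows "trace A = (\<Sum>i<CARD('n). lam i)"
  using assms by (simp add: trace_eq_sum_orthonormal_seq orthonormal_seq_def)

lemma trace_scaleR: "trace (c *\<^sub>R A) = c * trace (A :: real^'n^'n)"
  by (simp add: trace_def sum_distrib_left)

definition ssu_form :: "real^'n^'n \<Rightarrow> real^'n \<Rightarrow> real" where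
  "ssu_form A x = 4 * ((A *v x) \<bullet> (A *v x)) - (x \<bullet> (A *v x)) * trace A"

lemma ssu_sum_eq_ssu_form:
  fixes A :: "real^'n^'n" and \<nu> :: "'v::real_inner"
  assumes sym: "transpose A = A" and "norm \<nu> = 1"
    and B: "\<And>x z. B x z = (x \<bullet> (A *v z)) *\<^sub>R \<nu>"
  shows "(\<Sum>b\<in>UNIV. 4 * (norm (B x (axis b 1)))\<^sup>2 - B x x \<bullet> B (axis b 1) (axis b 1)) = ssu_form A x"
proof -
  have "x \<bullet> (A *v axis b 1) = (A *v x) $ b" for b
    by (simp add: symmetric_matrix_inner[OF sym] inner_axis)
  moreover have "axis b 1 \<bullet> (A *v axis b 1) = A $ b $ b" for b
    by (simp add: inner_axis' matrix_vector_mult_basis column_def)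
  ultimately have "(\<Sum>b\<in>UNIV. 4 * (norm (B x (axis b 1)))\<^sup>2 - B x x \<bullet> B (axis b 1) (axis b 1))
      = (\<Sum>b\<in>UNIV. 4 * ((A *v x) $ b)\<^sup>2 - A $ b $ b * (x \<bullet> (A *v x)))"
    using \<open>norm \<nu> = 1\<close> by (simp add: B power_mult_distrib dot_square_norm)
  also have "\<dots> = 4 * (\<Sum>b\<in>UNIV. ((A *v x) $ b)\<^sup>2) - (x \<bullet> (A *v x)) * trace A"
    by (simp add: trace_def sum_subtractf sum_distrib_left mult.commute)
  also have "\<dots> = ssu_form A x"
    by (simp add: ssu_form_def inner_vec_def[of "A *v x"] power2_eq_square)
  finally show ?thesis .
qed

lemma ssu_form_scaleR: "ssu_form (c *\<^sub>R A) x = c\<^sup>2 * ssu_form A x"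
  by (simp add: ssu_form_def trace_scaleR scaleR_matrix_vector_assoc[symmetric] algebra_simps
      power2_eq_square)

lemma ssu_form_eigenframe:
  fixes A :: "real^'n^'n"
  assumes sym: "transpose A = A" and on: "orthonormal_seq CARD('n) u"
    and eig: "\<And>i. i < CARD('n) \<Longrightarrow> A *v u i = lam i *\<^sub>R u i"
  shows "ssu_form A x = (\<Sum>i<CARD('n). (x \<bullet> u i)\<^sup>2 * (lam i * (4 * lam i - (\<Sum>j<CARD('n). lam j))))"
proof -
  note parseval = orthonormal_seq_parseval_cart[OF on]
  have Ax: "(A *v x) \<bullet> u i = lam i * (x \<bullet> u i)" if "i < CARD('n)" for i
    using eig[OF that] by (metis inner_commute inner_scaleR_right symmetric_matrix_inner[OF sym])
  have "trace A = (\<Sum>j<CARD('n). lam j)" by (rule trace_eq_sum_eigenvalues[OF on eig])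
  moreover have "x \<bullet> (A *v x) = (\<Sum>i<CARD('n). (x \<bullet> u i)\<^sup>2 * lam i)"
    by (simp only: parseval[of x "A *v x"]) (simp add: Ax power2_eq_square mult_ac)
  moreover have "(A *v x) \<bullet> (A *v x) = (\<Sum>i<CARD('n). (x \<bullet> u i)\<^sup>2 * (lam i)\<^sup>2)"
    by (simp only: parseval[of "A *v x" "A *v x"]) (simp add: Ax power2_eq_square mult_ac)
  ultimately show ?thesis
    by (simp add: ssu_form_def sum_distrib_left sum_distrib_right sum_subtractf[symmetric]
        power2_eq_square algebra_simps)
qed

lemma ssu_form_neg_iff_eigenvalues:
  fixes A :: "real^'n^'n"
  assumes sym: "transpose A = A" and on: "orthonormal_seq CARD('n) u"
    and eig: "\<And>i. i < CARD('n) \<Longrightarrow> A *v u i = lam i *\<^sub>R u i"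
  shows "(\<forall>x. norm x = 1 \<longrightarrow> ssu_form A x < 0) \<longleftrightarrow>
    (\<forall>i<CARD('n). lam i * (4 * lam i - (\<Sum>j<CARD('n). lam j)) < 0)"
    (is "_ \<longleftrightarrow> (\<forall>i<CARD('n). ?f i < 0)")
proof
  assume neg: "\<forall>x. norm x = 1 \<longrightarrow> ssu_form A x < 0"
  show "\<forall>i<CARD('n). ?f i < 0"
  proof (intro allI impI)
    fix i assume i: "i < CARD('n)"
    have "norm (u i) = 1" using on i by (simp add: orthonormal_seq_def norm_eq_1)
    moreover have "ssu_form A (u i) = ?f i"
    proof -
      have "(u i \<bullet> u j)\<^sup>2 * ?f j = (if j = i then ?f i else 0)" if "j < CARD('n)" for j
        using on i that by (simp add: orthonormal_seq_def)
      then show ?thesis using i by (simp add: ssu_form_eigenframe[OF sym on eig])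
    qed
    ultimately show "?f i < 0" using neg by metis
  qed
next
  assume neg: "\<forall>i<CARD('n). ?f i < 0"
  show "\<forall>x. norm x = 1 \<longrightarrow> ssu_form A x < 0"
  proof (intro allI impI)
    fix x :: "real^'n" assume "norm x = 1"
    have "(\<Sum>i<CARD('n). (x \<bullet> u i) * (x \<bullet> u i)) = 1"
      using orthonormal_seq_parseval_cart[OF on, of x x] \<open>norm x = 1\<close> by (simp add: norm_eq_1)
    then obtain i where i: "i < CARD('n)" "(x \<bullet> u i)\<^sup>2 \<noteq> 0"
      by (metis (no_types, lifting) lessThan_iff power2_eq_square sum.neutral zero_neq_one)
    have "(\<Sum>i<CARD('n). (x \<bullet> u i)\<^sup>2 * ?f i) < (\<Sum>i<CARD('n). 0)"
    proof (rule sum_strict_mono_ex1)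
      show "\<forall>j\<in>{..<CARD('n)}. (x \<bullet> u j)\<^sup>2 * ?f j \<le> 0"
        using neg by (metis lessThan_iff less_imp_le mult_nonneg_nonpos zero_le_power2)
      show "\<exists>j\<in>{..<CARD('n)}. (x \<bullet> u j)\<^sup>2 * ?f j < 0"
        using neg i by (intro bexI[of _ i]) (auto intro: mult_pos_neg)
    qed simp
    then show "ssu_form A x < 0" by (simp add: ssu_form_eigenframe[OF sym on eig])
  qed
qed

lemma pinching_if_eigenvalue_products_neg:
  fixes lam :: "nat \<Rightarrow> real"
  assumes "0 < n" and "0 \<le> (\<Sum>j<n. lam j)"
    and neg: "\<forall>i<n. lam i * (4 * lam i - (\<Sum>j<n. lam j)) < 0"
  shows "0 < lam 0 \<and> lam (n - 1) < (\<Sum>i<n - 1. lam i) / 3"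
proof -
  have bounds: "0 < lam i \<and> 4 * lam i < (\<Sum>j<n. lam j)" if "i < n" for i
    using neg that assms(2) by (auto simp: mult_less_0_iff)
  obtain m where n: "n = Suc m" using \<open>0 < n\<close> gr0_implies_Suc by blast
  then show ?thesis using bounds[of 0] bounds[of m] by simp
qed

lemma eigenvalue_products_neg_if_pinching:
  fixes lam :: "nat \<Rightarrow> real"
  assumes sorted: "\<forall>i j. i \<le> j \<and> j < n \<longrightarrow> lam i \<le> lam j"
    and "0 < lam 0" and pinched: "lam (n - 1) < (\<Sum>i<n - 1. lam i) / 3" and "i < n"
  shows "lam i * (4 * lam i - (\<Sum>j<n. lam j)) < 0"
proof -
  obtain m where n: "n = Suc m" using \<open>i < n\<close> less_imp_Suc_add by blast
  have "0 < lam i" using sorted \<open>0 < lam 0\<close> \<open>i < n\<close> by (meson le0 less_le_trans)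
  moreover have "lam i \<le> lam m" using sorted \<open>i < n\<close> n by simp
  ultimately show ?thesis using pinched n by (simp add: mult_pos_neg)
qed

lemma principal_curvatures_eigenframe:
  fixes A :: "real^'n^'n"
  assumes "principal_curvatures A lam"
  obtains u where "orthonormal_seq CARD('n) u" "\<And>i. i < CARD('n) \<Longrightarrow> A *v u i = lam i *\<^sub>R u i"
proof -
  from assms obtain u where "orthonormal_seq CARD('n) u" "\<forall>i<CARD('n). A *v u i = lam i *\<^sub>R u i"
    unfolding principal_curvatures_def orthonormal_seq_def by blast
  then show thesis using that by blast
qed

lemma trace_eq_sum_principal_curvatures:
  fixes A :: "real^'n^'n"
  assumes "principal_curvatures A lam"
  shows "trace A = (\<Sum>i<CARD('n). lam i)"
  using assms
proof (rule principal_curvatures_eigenframe)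
  fix u assume "orthonormal_seq CARD('n) u" "\<And>i. i < CARD('n) \<Longrightarrow> A *v u i = lam i *\<^sub>R u i"
  then show ?thesis by (rule trace_eq_sum_eigenvalues)
qed

lemma ssu_form_neg_iff_curvature_products:
  fixes A :: "real^'n^'n"
  assumes sym: "transpose A = A" and s: "s \<in> {1, -1}" and pc: "principal_curvatures (s *\<^sub>R A) lam"
  shows "(\<forall>x. norm x = 1 \<longrightarrow> ssu_form A x < 0) \<longleftrightarrow>
    (\<forall>i<CARD('n). lam i * (4 * lam i - (\<Sum>j<CARD('n). lam j)) < 0)"
  using pc
proof (rule principal_curvatures_eigenframe)
  fix u assume on: "orthonormal_seq CARD('n) u"
    and eig: "\<And>i. i < CARD('n) \<Longrightarrow> (s *\<^sub>R A) *v u i = lam i *\<^sub>R u i"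
  have "transpose (s *\<^sub>R A) = s *\<^sub>R A" using sym by (simp add: transpose_scalar)
  moreover have "ssu_form (s *\<^sub>R A) x = ssu_form A x" for x using s by (auto simp: ssu_form_scaleR)
  ultimately show ?thesis using ssu_form_neg_iff_eigenvalues[OF _ on eig] by simp
qed

lemma ssu_form_neg_iff_pinched_curvatures:
  fixes A :: "real^'n^'n"
  assumes sym: "transpose A = A"
  shows "(\<forall>x. norm x = 1 \<longrightarrow> ssu_form A x < 0) \<longleftrightarrow>
    (\<exists>s\<in>{1, -1::real}. \<exists>lam. principal_curvatures (s *\<^sub>R A) lam \<and>
        0 < lam 0 \<and> lam (CARD('n) - 1) < (\<Sum>i<CARD('n) - 1. lam i) / 3)"
proof
  assume neg: "\<forall>x. norm x = 1 \<longrightarrow> ssu_form A x < 0"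
  (* Orient the normal so that the mean curvature is nonnegative. *)
  define s :: real where "s = (if 0 \<le> trace A then 1 else -1)"
  have s: "s \<in> {1, -1}" and "0 \<le> trace (s *\<^sub>R A)" by (auto simp: s_def trace_scaleR)
  obtain lam where pc: "principal_curvatures (s *\<^sub>R A) lam"
    using symmetric_matrix_principal_curvatures[of "s *\<^sub>R A"] sym by (auto simp: transpose_scalar)
  have "0 < lam 0 \<and> lam (CARD('n) - 1) < (\<Sum>i<CARD('n) - 1. lam i) / 3"
    using pinching_if_eigenvalue_products_neg[of "CARD('n)" lam] neg
      ssu_form_neg_iff_curvature_products[OF sym s pc] trace_eq_sum_principal_curvatures[OF pc]
      \<open>0 \<le> trace (s *\<^sub>R A)\<close> by simp
  then show "\<exists>s\<in>{1, -1::real}. \<exists>lam. principal_curvatures (s *\<^sub>R A) lam \<and>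
      0 < lam 0 \<and> lam (CARD('n) - 1) < (\<Sum>i<CARD('n) - 1. lam i) / 3"
    using s pc by blast
next
  assume "\<exists>s\<in>{1, -1::real}. \<exists>lam. principal_curvatures (s *\<^sub>R A) lam \<and>
      0 < lam 0 \<and> lam (CARD('n) - 1) < (\<Sum>i<CARD('n) - 1. lam i) / 3"
  then obtain s lam where s: "s \<in> {1, -1::real}" and pc: "principal_curvatures (s *\<^sub>R A) lam"
    and pinched: "0 < lam 0" "lam (CARD('n) - 1) < (\<Sum>i<CARD('n) - 1. lam i) / 3"
    by blast
  have "\<forall>i j. i \<le> j \<and> j < CARD('n) \<longrightarrow> lam i \<le> lam j"
    using pc by (simp add: principal_curvatures_def)
  then show "\<forall>x. norm x = 1 \<longrightarrow> ssu_form A x < 0"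
    using eigenvalue_products_neg_if_pinching[of "CARD('n)" lam] pinched
      ssu_form_neg_iff_curvature_products[OF sym s pc] by blast
qed

theorem theorem5p1:
  fixes N :: "'y set"
    and B :: "'y \<Rightarrow> real^'n \<Rightarrow> real^'n \<Rightarrow> real^'m"
    and A :: "'y \<Rightarrow> real^'n^'n"
    and \<nu> :: "'y \<Rightarrow> real^'m"
  assumes hyp: "CARD('m) = CARD('n) + 1"
    and sym: "\<forall>y\<in>N. transpose (A y) = A y"
    and unit: "\<forall>y\<in>N. norm (\<nu> y) = 1"
    and sff: "\<forall>y\<in>N. \<forall>x z. B y x z = inner x (A y *v z) *\<^sub>R \<nu> y"
  shows "phi_SSU N B \<longleftrightarrow>
    (\<forall>y\<in>N. \<exists>s\<in>{1, -1::real}. \<exists>lam. principal_curvatures (s *\<^sub>R A y) lam \<and>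
        0 < lam 0 \<and> lam (CARD('n) - 1) < (\<Sum>i<CARD('n) - 1. lam i) / 3)"
proof -
  have "(\<Sum>b\<in>UNIV. 4 * (norm (B y x (axis b 1)))\<^sup>2 - inner (B y x x) (B y (axis b 1) (axis b 1)))
      = ssu_form (A y) x" if "y \<in> N" for y x
    using ssu_sum_eq_ssu_form[of "A y" "\<nu> y" "B y" x] sym unit sff that by auto
  then have "phi_SSU N B \<longleftrightarrow> (\<forall>y\<in>N. \<forall>x. norm x = 1 \<longrightarrow> ssu_form (A y) x < 0)"
    by (simp add: phi_SSU_def)
  also have "\<dots> \<longleftrightarrow> (\<forall>y\<in>N. \<exists>s\<in>{1, -1::real}. \<exists>lam. principal_curvatures (s *\<^sub>R A y) lam \<and>
        0 < lam 0 \<and> lam (CARD('n) - 1) < (\<Sum>i<CARD('n) - 1. lam i) / 3)"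
    using ssu_form_neg_iff_pinched_curvatures sym by blast
  finally show ?thesis .
qed

end
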